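(* For the g-cell structure $\{(G_i,r_i),g_i^{i+1}\}_{i\in\mathbb{N}}$ constructed below, the quotient space $G^\ast=G_\infty/r$ is not regular: the point $\pi(\bar a)$, where $\bar a=(a_1,a_2,\dots)$, and the closed set $\pi(\{(b_1^k,b_2^k,\dots):k\in\mathbb{N}\})$, which does not contain $\pi(\bar a)$, cannot be separated by disjoint open sets. In particular, there exist spaces admitting a g-cell structure (with all $G_i$ discrete) which are not regular.
   Context: Construction. Let $L_1=0$ and $L_{i+1}=L_i+i$. All sets are discrete and all named elements distinct. $G_1=\{a_1\}\cup\{b_1^k:k\in\mathbb{N}\}$. For $i\ge2$, with $C^i_k=\{c^1_{i,k},c^2_{i,k}\}$ for $1\le k\le L_i$, $G_i=\{a_i\}\cup\{b_i^k:k\in\mathbb{N}\}\cup\bigcup_{k=1}^{L_i}C^i_k\cup\{d_i^k:k\in\mathbb{N}\}$. $r_i$ is the union of $\Delta_{G_i}$ with $\{(a_i,b_i^k),(b_i^k,a_i):k\ge i\}$, $\{(b_i^k,b_i^n):k,n\ge i\}$, $\{(a,b):a,b\in C^i_k,\ 1\le k\le L_i\}$ and $\{(d_i^{(i-1)j+k},b_i^k),(b_i^k,d_i^{(i-1)j+k}):1\le k<i,\ j\ge0\}$. The map $g_i^{i+1}:G_{i+1}\to G_i$: $a_{i+1}\mapsto a_i$; $b_{i+1}^k\mapsto b_i^k$; $c^1_{i+1,1}\mapsto a_i$; $c^2_{i+1,1}\mapsto b_i^i$; $c^\rho_{i+1,k}\mapsto c^\rho_{i,k-1}$ ($\rho=1,2$,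 $2\le k\le L_i+1$); $c^1_{i+1,k}\mapsto d_i^{k-(L_i+1)}$ and $c^2_{i+1,k}\mapsto b_i^{k-(L_i+1)}$ ($L_i+2\le k\le L_{i+1}$); $d_{i+1}^k\mapsto d_i^{(i-1)(j+1)+n}$ if $k=ij+n$, $0<n<i$, $j\ge0$; $d_{i+1}^k\mapsto a_i$ if $k=ij$, $j\ge1$. $G_\infty=\{(x_n)\in\prod G_n:g_i^{i+1}(x_{i+1})=x_i\ \forall i\}$ with the product topology; the natural relation $r=\{(\bar x,\bar y)\in G_\infty^2:(x_n,y_n)\in r_n\ \forall n\}$ is an equivalence relation (this sequence is a g-cell structure); $G^\ast=G_\infty/r$ has the quotient topology and $\pi:G_\infty\to G^\ast$ is the quotient map. A space admits a g-cell structure if it is homeomorphic to $G^\ast$ for some inverse sequence of cellular graphs (pairs of a nonempty space and a reflexive symmetric relation, with continuous edge-preserving bonding maps) whose natural relation is an equivalence relation. Regular means: every point and closed set not containing it have disjoint open neighbourhoods. *)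

theory Defs
  imports "HOL-Analysis.Analysis"
begin

text \<open>Inverse sequences are indexed by n >= 1 (index 0 is unused).
  X n is the space G_n, R n the relation r_n, f n the bonding map G_(n+1) -> G_n.\<close>

definition cellular_graph :: "'a topology \<Rightarrow> 'a rel \<Rightarrow> bool" where
  "cellular_graph X R \<longleftrightarrow> topspace X \<noteq> {} \<and> R \<subseteq> topspace X \<times> topspace X
     \<and> (\<forall>x\<in>topspace X. (x, x) \<in> R) \<and> sym R"

definition inv_limit :: "(nat \<Rightarrow> 'a topology) \<Rightarrow> (nat \<Rightarrow> 'a \<Rightarrow> 'a) \<Rightarrow> (nat \<Rightarrow> 'a) set" where
  "inv_limit X f = {x \<in> (\<Pi>\<^sub>E n\<in>{1..}. topspace (X n)). \<forall>i\<ge>1. f i (x (Suc i)) = x i}"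

definition inv_limit_top :: "(nat \<Rightarrow> 'a topology) \<Rightarrow> (nat \<Rightarrow> 'a \<Rightarrow> 'a) \<Rightarrow> (nat \<Rightarrow> 'a) topology" where
  "inv_limit_top X f = subtopology (product_topology X {1..}) (inv_limit X f)"

definition natural_rel :: "(nat \<Rightarrow> 'a topology) \<Rightarrow> (nat \<Rightarrow> 'a rel) \<Rightarrow> (nat \<Rightarrow> 'a \<Rightarrow> 'a) \<Rightarrow> (nat \<Rightarrow> 'a) rel" where
  "natural_rel X R f = {(x, y). x \<in> inv_limit X f \<and> y \<in> inv_limit X f \<and> (\<forall>n\<ge>1. (x n, y n) \<in> R n)}"

definition gcell_structure :: "(nat \<Rightarrow> 'a topology) \<Rightarrow> (nat \<Rightarrow> 'a rel) \<Rightarrow> (nat \<Rightarrow> 'a \<Rightarrow> 'a) \<Rightarrow> bool" where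
  "gcell_structure X R f \<longleftrightarrow>
     (\<forall>i\<ge>1. cellular_graph (X i) (R i)) \<and>
     (\<forall>i\<ge>1. continuous_map (X (Suc i)) (X i) (f i)) \<and>
     (\<forall>i\<ge>1. \<forall>x y. (x, y) \<in> R (Suc i) \<longrightarrow> (f i x, f i y) \<in> R i) \<and>
     equiv (inv_limit X f) (natural_rel X R f)"

definition quotient_top :: "'b topology \<Rightarrow> 'b rel \<Rightarrow> 'b set topology" where
  "quotient_top T E = topology (\<lambda>U. U \<subseteq> topspace T // E \<and>
       openin T {x \<in> topspace T. E `` {x} \<in> U})"

definition qmap :: "'b rel \<Rightarrow> 'b \<Rightarrow> 'b set" where
  "qmap E x = E `` {x}"

datatype elt = Ea nat | Eb nat nat | Ec nat nat nat | Ed nat nat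
  (* Ea i = a_i;  Eb i k = b_i^k;  Ec rho i k = c^rho_{i,k};  Ed i k = d_i^k *)

primrec L :: "nat \<Rightarrow> nat" where
  "L 0 = 0" | "L (Suc i) = L i + i"

definition G :: "nat \<Rightarrow> elt set" where
  "G i = {Ea i} \<union> {Eb i k | k. k \<ge> 1} \<union>
     (if i \<ge> 2 then {Ec \<rho> i k | \<rho> k. \<rho> \<in> {1, 2} \<and> 1 \<le> k \<and> k \<le> L i} \<union> {Ed i k | k. k \<ge> 1}
      else {})"

definition r :: "nat \<Rightarrow> elt rel" where
  "r i = Id_on (G i)
     \<union> {(Ea i, Eb i k) | k. k \<ge> i} \<union> {(Eb i k, Ea i) | k. k \<ge> i}
     \<union> {(Eb i k, Eb i n) | k n. k \<ge> i \<and> n \<ge> i}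
     \<union> {(Ec \<rho> i k, Ec \<sigma> i k) | \<rho> \<sigma> k. \<rho> \<in> {1, 2} \<and> \<sigma> \<in> {1, 2} \<and> 1 \<le> k \<and> k \<le> L i}
     \<union> {(Ed i ((i - 1) * j + k), Eb i k) | j k. 1 \<le> k \<and> k < i}
     \<union> {(Eb i k, Ed i ((i - 1) * j + k)) | j k. 1 \<le> k \<and> k < i}"

text \<open>g i is the bonding map g_i^(i+1) : G_(i+1) -> G_i.\<close>
definition g :: "nat \<Rightarrow> elt \<Rightarrow> elt" where
  "g i x = (case x of
       Ea _ \<Rightarrow> Ea i
     | Eb _ k \<Rightarrow> Eb i k
     | Ec \<rho> _ k \<Rightarrow>
         (if k = 1 then (if \<rho> = 1 then Ea i else Eb i i)
          else if k \<le> L i + 1 then Ec \<rho> i (k - 1)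
          else if \<rho> = 1 then Ed i (k - (L i + 1)) else Eb i (k - (L i + 1)))
     | Ed _ k \<Rightarrow>
         (if k mod i = 0 then Ea i
          else Ed i ((i - 1) * (k div i + 1) + k mod i)))"

definition Gtop :: "nat \<Rightarrow> elt topology" where
  "Gtop i = discrete_topology (G i)"

definition Ginf :: "(nat \<Rightarrow> elt) topology" where
  "Ginf = inv_limit_top Gtop g"

definition rnat :: "(nat \<Rightarrow> elt) rel" where
  "rnat = natural_rel Gtop r g"

definition Gstar :: "(nat \<Rightarrow> elt) set topology" where
  "Gstar = quotient_top Ginf rnat"

definition abar :: "nat \<Rightarrow> elt" where
  "abar = (\<lambda>n. if n \<ge> 1 then Ea n else undefined)"

definition bbar :: "nat \<Rightarrow> nat \<Rightarrow> elt" where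
  "bbar k = (\<lambda>n. if n \<ge> 1 then Eb n k else undefined)"

end

theory Submission
  imports Defs
begin

(* Each r_i is transitive except along paths b -- d -- b through a vertex d_i^m, and no thread of
   the inverse limit stays among the d's forever: along such a thread the block index
   (m - 1) div (i - 1) of d_i^m strictly decreases.  So for threads x ~ y ~ z the coordinates of x
   and z are r_N-related at arbitrarily high levels N, hence at all levels because the bonding maps
   preserve edges.  The same argument shows that each thread b^k is related only to itself, so the
   image of the threads b^k is closed.
   A basic neighbourhood of a fixes the coordinates up to some level n, and one of b^(n+1) fixes
   them up to some level M.  They contain related threads: one follows a up to level n + 1 and then
   d-vertices adjacent to b^(n+1), the other follows b^(n+1) up to level M, and above M both run
   through cells C that the bonding maps collapse onto these adjacencies. *)

section \<open>Quotient topology\<close>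

lemma istopology_quotient_top:
  "istopology (\<lambda>U. U \<subseteq> topspace T // E \<and> openin T {x \<in> topspace T. E `` {x} \<in> U})"
  unfolding istopology_def
proof (rule conjI; (intro allI impI)?)
  fix S U
  assume "S \<subseteq> topspace T // E \<and> openin T {x \<in> topspace T. E `` {x} \<in> S}"
    and "U \<subseteq> topspace T // E \<and> openin T {x \<in> topspace T. E `` {x} \<in> U}"
  moreover have "{x \<in> topspace T. E `` {x} \<in> S \<inter> U}
      = {x \<in> topspace T. E `` {x} \<in> S} \<inter> {x \<in> topspace T. E `` {x} \<in> U}"
    by auto
  ultimately show "S \<inter> U \<subseteq> topspace T // E \<and> openin T {x \<in> topspace T. E `` {x} \<in> S \<inter> U}"
    by auto
next
  fix K
  assume K: "\<forall>U\<in>K. U \<subseteq> topspace T // E \<and> openin T {x \<in> topspace T. E `` {x} \<in> U}"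
  have "{x \<in> topspace T. E `` {x} \<in> \<Union>K} = (\<Union>U\<in>K. {x \<in> topspace T. E `` {x} \<in> U})"
    by auto
  moreover have "openin T (\<Union>U\<in>K. {x \<in> topspace T. E `` {x} \<in> U})"
    using K by (intro openin_Union) auto
  ultimately show "\<Union>K \<subseteq> topspace T // E \<and> openin T {x \<in> topspace T. E `` {x} \<in> \<Union>K}"
    using K by auto
qed

lemma openin_quotient_top:
  "openin (quotient_top T E) U \<longleftrightarrow>
     U \<subseteq> topspace T // E \<and> openin T {x \<in> topspace T. E `` {x} \<in> U}"
  unfolding quotient_top_def by (subst topology_inverse'[OF istopology_quotient_top]) simp

lemma topspace_quotient_top: "topspace (quotient_top T E) = topspace T // E"
proof
  show "topspace (quotient_top T E) \<subseteq> topspace T // E"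
    using openin_quotient_top openin_topspace by blast
  have "{x \<in> topspace T. E `` {x} \<in> topspace T // E} = topspace T"
    by (auto intro: quotientI)
  then have "openin (quotient_top T E) (topspace T // E)"
    by (simp add: openin_quotient_top)
  then show "topspace T // E \<subseteq> topspace (quotient_top T E)"
    by (rule openin_subset)
qed

lemma qmap_in_topspace_quotient_top:
  "x \<in> topspace T \<Longrightarrow> qmap E x \<in> topspace (quotient_top T E)"
  unfolding topspace_quotient_top qmap_def by (rule quotientI)

lemma closedin_quotient_top_qmap_image:
  assumes E: "equiv (topspace T) E" and B: "B \<subseteq> topspace T" and closed: "closedin T (E `` B)"
  shows "closedin (quotient_top T E) (qmap E ` B)"
  unfolding closedin_def topspace_quotient_top
proof
  show "qmap E ` B \<subseteq> topspace T // E"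
    using B unfolding qmap_def by (blast intro: quotientI)
  have "E `` {x} \<in> qmap E ` B \<longleftrightarrow> x \<in> E `` B" if x: "x \<in> topspace T" for x
  proof
    assume "E `` {x} \<in> qmap E ` B"
    then obtain b where b: "b \<in> B" "E `` {b} = E `` {x}" by (auto simp: qmap_def)
    then have "(b, x) \<in> E"
      using equiv_class_eq_iff[OF E, of b x] B x by auto
    then show "x \<in> E `` B"
      using b(1) by blast
  next
    assume "x \<in> E `` B"
    then obtain b where "b \<in> B" "(b, x) \<in> E" by blast
    then show "E `` {x} \<in> qmap E ` B"
      using equiv_class_eq[OF E] unfolding qmap_def by (metis image_eqI)
  qed
  moreover have "E `` B \<subseteq> topspace T"
    using equiv_type[OF E] by blast
  ultimately have "{x \<in> topspace T. E `` {x} \<in> topspace T // E - qmap E ` B} = topspace T - E `` B"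
    by (blast intro: quotientI)
  then show "openin (quotient_top T E) (topspace T // E - qmap E ` B)"
    using closed by (simp add: openin_quotient_top openin_diff)
qed

section \<open>Inverse limits\<close>

lemma topspace_inv_limit_top: "topspace (inv_limit_top X f) = inv_limit X f"
  unfolding inv_limit_top_def by (auto simp: inv_limit_def)

lemma inv_limit_step: "x \<in> inv_limit X f \<Longrightarrow> i \<ge> 1 \<Longrightarrow> f i (x (Suc i)) = x i"
  by (simp add: inv_limit_def)

lemma inv_limit_in_topspace: "x \<in> inv_limit X f \<Longrightarrow> i \<ge> 1 \<Longrightarrow> x i \<in> topspace (X i)"
  by (auto simp: inv_limit_def)

lemma inv_limit_0: "x \<in> inv_limit X f \<Longrightarrow> x 0 = undefined"
  by (auto simp: inv_limit_def)

lemma inv_limitI: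
  assumes "\<And>i. i \<ge> 1 \<Longrightarrow> x i \<in> topspace (X i)" and "x 0 = undefined"
    and "\<And>i. i \<ge> 1 \<Longrightarrow> f i (x (Suc i)) = x i"
  shows "x \<in> inv_limit X f"
  unfolding inv_limit_def
proof (intro CollectI conjI PiE_I allI impI)
  fix i :: nat
  assume "i \<notin> {1..}"
  then show "x i = undefined" using assms(2) by (simp add: not_less_eq_eq)
qed (use assms in auto)

lemma inv_limit_rel_downward:
  assumes f: "\<And>i u v. i \<ge> 1 \<Longrightarrow> (u, v) \<in> R (Suc i) \<Longrightarrow> (f i u, f i v) \<in> R i"
    and x: "x \<in> inv_limit X f" and z: "z \<in> inv_limit X f" and "1 \<le> n" "n \<le> N"
    and "(x N, z N) \<in> R N"
  shows "(x n, z n) \<in> R n"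
  using \<open>n \<le> N\<close> \<open>(x N, z N) \<in> R N\<close>
proof (induction N rule: dec_induct)
  case (step N)
  then have "(f N (x (Suc N)), f N (z (Suc N))) \<in> R N"
    using f \<open>1 \<le> n\<close> by simp
  then show ?case
    using step inv_limit_step[OF x] inv_limit_step[OF z] \<open>1 \<le> n\<close> by simp
qed

lemma inv_limit_eq_downward:
  assumes "x \<in> inv_limit X f" "z \<in> inv_limit X f" "1 \<le> n" "n \<le> N" "x N = z N"
  shows "x n = z n"
  using inv_limit_rel_downward[of "\<lambda>_. Id" f x X z n N] assms by simp

lemma openin_inv_limit_top_coordinate:
  assumes "i \<ge> 1" and "openin (X i) U"
  shows "openin (inv_limit_top X f) {z \<in> inv_limit X f. z i \<in> U}"
proof -
  have "continuous_map (inv_limit_top X f) (X i) (\<lambda>z. z i)"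
    unfolding inv_limit_top_def using assms(1)
    by (intro continuous_map_from_subtopology continuous_map_product_projection) simp
  from openin_continuous_map_preimage[OF this assms(2)] show ?thesis
    by (simp add: topspace_inv_limit_top)
qed

lemma inv_limit_top_cylinder_neighbourhood:
  assumes "openin (inv_limit_top X f) S" and "w \<in> S"
  shows "\<exists>n. \<forall>z\<in>inv_limit X f. (\<forall>i\<in>{1..n}. z i = w i) \<longrightarrow> z \<in> S"
proof -
  obtain T where T: "openin (product_topology X {1..}) T" "S = T \<inter> inv_limit X f"
    using assms(1) unfolding inv_limit_top_def openin_subtopology by blast
  then obtain U where U: "finite {i \<in> {1..}. U i \<noteq> topspace (X i)}"
      "w \<in> Pi\<^sub>E {1..} U" "Pi\<^sub>E {1..} U \<subseteq> T"
    using assms(2) unfolding openin_product_topology_alt by blast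
  then obtain n where n: "\<forall>i \<in> {i \<in> {1..}. U i \<noteq> topspace (X i)}. i \<le> n"
    using finite_nat_set_iff_bounded_le by blast
  show ?thesis
  proof (intro exI ballI impI)
    fix z assume z: "z \<in> inv_limit X f" "\<forall>i\<in>{1..n}. z i = w i"
    have "z \<in> Pi\<^sub>E {1..} U"
    proof (rule PiE_I)
      fix i :: nat assume i: "i \<in> {1..}"
      show "z i \<in> U i"
      proof (cases "i \<le> n")
        case True then show ?thesis using z(2) U(2) i by auto
      next
        case False then show ?thesis using n inv_limit_in_topspace[OF z(1), of i] i by fastforce
      qed
    next
      fix i :: nat assume "i \<notin> {1..}"
      then show "z i = undefined" using z(1) by (auto simp: inv_limit_def)
    qed
    then show "z \<in> S" using U(3) T(2) z(1) by auto
  qed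
qed

lemma quotient_inv_limit_not_separated:
  assumes E: "equiv (inv_limit X f) E" and a: "a \<in> inv_limit X f" and B: "B \<subseteq> inv_limit X f"
    and linked: "\<And>n. \<exists>b\<in>B. \<forall>m. \<exists>x y. (x, y) \<in> E
                     \<and> (\<forall>i\<in>{1..n}. x i = a i) \<and> (\<forall>i\<in>{1..m}. y i = b i)"
  shows "\<not> (\<exists>U V. openin (quotient_top (inv_limit_top X f) E) U
              \<and> openin (quotient_top (inv_limit_top X f) E) V
              \<and> qmap E a \<in> U \<and> qmap E ` B \<subseteq> V \<and> disjnt U V)"
proof
  let ?Q = "quotient_top (inv_limit_top X f) E"
  assume "\<exists>U V. openin ?Q U \<and> openin ?Q V \<and> qmap E a \<in> U \<and> qmap E ` B \<subseteq> V \<and> disjnt U V"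
  then obtain U V where UQ: "openin ?Q U" and VQ: "openin ?Q V"
    and "qmap E a \<in> U" "qmap E ` B \<subseteq> V" "disjnt U V"
    by blast
  have U: "openin (inv_limit_top X f) {x \<in> inv_limit X f. E `` {x} \<in> U}"
    using UQ by (simp add: openin_quotient_top topspace_inv_limit_top)
  have V: "openin (inv_limit_top X f) {x \<in> inv_limit X f. E `` {x} \<in> V}"
    using VQ by (simp add: openin_quotient_top topspace_inv_limit_top)
  have aU: "a \<in> {x \<in> inv_limit X f. E `` {x} \<in> U}"
    using a \<open>qmap E a \<in> U\<close> by (simp add: qmap_def)
  have BV: "B \<subseteq> {x \<in> inv_limit X f. E `` {x} \<in> V}"
    using B \<open>qmap E ` B \<subseteq> V\<close> unfolding qmap_def by blast
  obtain n where n: "\<forall>z\<in>inv_limit X f. (\<forall>i\<in>{1..n}. z i = a i) \<longrightarrow> E `` {z} \<in> U"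
    using inv_limit_top_cylinder_neighbourhood[OF U aU] by blast
  obtain b where b: "b \<in> B"
    and xy: "\<forall>m. \<exists>x y. (x, y) \<in> E \<and> (\<forall>i\<in>{1..n}. x i = a i) \<and> (\<forall>i\<in>{1..m}. y i = b i)"
    using linked[of n] by blast
  obtain m where m: "\<forall>z\<in>inv_limit X f. (\<forall>i\<in>{1..m}. z i = b i) \<longrightarrow> E `` {z} \<in> V"
    using inv_limit_top_cylinder_neighbourhood[OF V] b BV by blast
  obtain x y where xy: "(x, y) \<in> E" and "\<forall>i\<in>{1..n}. x i = a i" "\<forall>i\<in>{1..m}. y i = b i"
    using xy by blast
  moreover have "x \<in> inv_limit X f" "y \<in> inv_limit X f"
    using equiv_type[OF E] xy by blast+
  ultimately have "E `` {x} \<in> U" "E `` {y} \<in> V"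
    using n m by blast+
  moreover have "E `` {x} = E `` {y}"
    using equiv_class_eq[OF E xy] .
  ultimately show False
    using \<open>disjnt U V\<close> by (simp add: disjnt_def disjoint_iff)
qed

section \<open>The natural relation of the construction is an equivalence\<close>

lemma L_one [simp]: "L 1 = 0"
  by (simp add: numeral_eq_Suc)

lemma Ea_in_G [simp]: "Ea i \<in> G i"
  by (simp add: G_def)

lemma Eb_in_G: "k \<ge> 1 \<Longrightarrow> Eb i k \<in> G i"
  by (simp add: G_def)

lemma topspace_Gtop [simp]: "topspace (Gtop i) = G i"
  by (simp add: Gtop_def)

lemma g_maps_G: "i \<ge> 1 \<Longrightarrow> x \<in> G (Suc i) \<Longrightarrow> g i x \<in> G i"
  by (cases "i = 1"; cases x) (auto simp: G_def g_def)

lemma r_subset_G: "i \<ge> 1 \<Longrightarrow> r i \<subseteq> G i \<times> G i"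
  by (cases "i = 1") (auto simp: r_def G_def)

lemma r_refl: "x \<in> G i \<Longrightarrow> (x, x) \<in> r i"
  unfolding r_def by auto

lemma sym_r: "sym (r i)"
  unfolding sym_def r_def by blast

lemma r_Ed_Eb: "m = (i - 1) * j + k \<Longrightarrow> 1 \<le> k \<Longrightarrow> k < i \<Longrightarrow> (Ed i m, Eb i k) \<in> r i"
  unfolding r_def by blast

lemma g_preserves_r_Ec:
  assumes "i \<ge> 1" "\<rho> \<in> {1, 2}" "\<sigma> \<in> {1, 2}" "1 \<le> k" "k \<le> L (Suc i)"
  shows "(g i (Ec \<rho> (Suc i) k), g i (Ec \<sigma> (Suc i) k)) \<in> r i"
proof -
  consider "k = 1" | "k \<noteq> 1" "k \<le> L i + 1" | "L i + 1 < k" by linarith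
  then show ?thesis
  proof cases
    case 1
    then show ?thesis using assms by (auto simp: g_def r_def G_def)
  next
    case 2
    then have "i \<ge> 2" using assms by (cases "i = 1") auto
    then show ?thesis using assms 2 by (auto simp: g_def r_def G_def)
  next
    case 3
    define k' where "k' = k - (L i + 1)"
    have "1 \<le> k'" "k' < i" using 3 assms by (auto simp: k'_def)
    then have "(Ed i k', Eb i k') \<in> r i" "(Eb i k', Ed i k') \<in> r i"
      using r_Ed_Eb[of k' i 0] sym_r by (auto elim: symE)
    moreover have "Ed i k' \<in> G i" "Eb i k' \<in> G i"
      using \<open>1 \<le> k'\<close> \<open>k' < i\<close> by (auto simp: G_def)
    ultimately show ?thesis
      using assms 3 by (auto simp: g_def k'_def intro: r_refl)
  qed
qed

lemma g_preserves_r_Ed_Eb: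
  assumes "i \<ge> 1" "1 \<le> k" "k \<le> i"
  shows "(g i (Ed (Suc i) (i * j + k)), g i (Eb (Suc i) k)) \<in> r i"
proof (cases "k = i")
  case True
  then show ?thesis using assms by (auto simp: g_def r_def)
next
  case False
  then have "(i * j + k) mod i = k" "(i * j + k) div i = j" using assms by auto
  then show ?thesis
    using False assms by (auto simp: g_def intro!: r_Ed_Eb[where j = "j + 1"])
qed

lemma g_preserves_r: assumes "i \<ge> 1" "(x, y) \<in> r (Suc i)" shows "(g i x, g i y) \<in> r i"
  using assms(2) unfolding r_def[of "Suc i"]
proof (elim UnE)
  assume "(x, y) \<in> Id_on (G (Suc i))"
  then show ?thesis using g_maps_G[OF assms(1)] r_refl by auto
next
  assume "(x, y) \<in> {(Ec \<rho> (Suc i) k, Ec \<sigma> (Suc i) k) |\<rho> \<sigma> k.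
    \<rho> \<in> {1, 2} \<and> \<sigma> \<in> {1, 2} \<and> 1 \<le> k \<and> k \<le> L (Suc i)}"
  then show ?thesis using assms g_preserves_r_Ec by blast
next
  assume "(x, y) \<in> {(Ed (Suc i) ((Suc i - 1) * j + k), Eb (Suc i) k) |j k. 1 \<le> k \<and> k < Suc i}"
  then show ?thesis using assms g_preserves_r_Ed_Eb by auto
next
  assume "(x, y) \<in> {(Eb (Suc i) k, Ed (Suc i) ((Suc i - 1) * j + k)) |j k. 1 \<le> k \<and> k < Suc i}"
  then obtain j k where "x = Eb (Suc i) k" "y = Ed (Suc i) (i * j + k)" "1 \<le> k" "k \<le> i"
    by auto
  then have "(g i y, g i x) \<in> r i" using assms g_preserves_r_Ed_Eb by simp
  then show ?thesis by (rule symD[OF sym_r])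
qed (use assms in \<open>auto simp: g_def r_def\<close>)

lemma block_offset_unique:
  fixes d :: nat
  assumes "d * j + k = d * j' + k'" "1 \<le> k" "k \<le> d" "1 \<le> k'" "k' \<le> d"
  shows "k = k'"
proof (cases j j' rule: linorder_cases)
  case less
  then have "d * (j + 1) \<le> d * j'" by (intro mult_le_mono2) simp
  then show ?thesis using assms by (simp add: algebra_simps)
next
  case greater
  then have "d * (j' + 1) \<le> d * j" by (intro mult_le_mono2) simp
  then show ?thesis using assms by (simp add: algebra_simps)
qed (use assms in simp)

lemma r_trans_unless_Ed:
  assumes "(p, q) \<in> r N" "(q, s) \<in> r N" "\<forall>m. p \<noteq> Ed N m"
  shows "(p, s) \<in> r N"
proof -
  have "(p, s) \<in> r N" if "p = Eb N k" "q = Ed N ((N - 1) * j + k)" "1 \<le> k" "k < N" for j k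
  proof -
    have "s = q \<or> (\<exists>j' k'. (N - 1) * j + k = (N - 1) * j' + k' \<and> s = Eb N k' \<and> 1 \<le> k' \<and> k' < N)"
      using assms(2) that unfolding r_def by auto
    then show ?thesis
    proof
      assume "s = q"
      then show ?thesis using assms(1) by simp
    next
      assume "\<exists>j' k'. (N - 1) * j + k = (N - 1) * j' + k' \<and> s = Eb N k' \<and> 1 \<le> k' \<and> k' < N"
      then obtain j' k' where "(N - 1) * j + k = (N - 1) * j' + k'" "s = Eb N k'" "1 \<le> k'" "k' < N"
        by blast
      moreover have "k \<le> N - 1" "k' \<le> N - 1" using that \<open>k' < N\<close> by auto
      ultimately have "s = p"
        using block_offset_unique[of "N - 1" j k j' k'] that by simp
      moreover have "p \<in> G N" using that by (auto simp: G_def)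
      ultimately show ?thesis by (simp add: r_refl)
    qed
  qed
  moreover have "(p, q) \<notin> {(Ed N ((N - 1) * j + k), Eb N k) |j k. 1 \<le> k \<and> k < N}"
    using assms(3) by auto
  ultimately show ?thesis
    using assms(1,2) unfolding r_def[of N] by auto
qed

lemma r_Eb_cases: "(p, Eb N k) \<in> r N \<Longrightarrow> k < N \<Longrightarrow> p = Eb N k \<or> (\<exists>m. p = Ed N m)"
  unfolding r_def by auto

lemma g_Ed_index_decreases:
  assumes "i \<ge> 1" "g i (Ed (Suc i) m) = Ed i m'"
  shows "(m - 1) div i < (m' - 1) div (i - 1)"
proof -
  have nz: "m mod i \<noteq> 0" and m': "m' = (i - 1) * (m div i + 1) + m mod i"
    using assms(2) by (auto simp: g_def split: if_splits)
  then have "i \<ge> 2" using assms(1) by (cases "i = 1") auto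
  have "m mod i < i" using assms(1) by simp
  have "((i - 1) * (m div i + 1) + (m mod i - 1)) div (i - 1) = m div i + 1"
    using \<open>i \<ge> 2\<close> \<open>m mod i < i\<close> nz by (subst div_mult_self4) simp_all
  moreover have "m' - 1 = (i - 1) * (m div i + 1) + (m mod i - 1)" using m' nz by simp
  ultimately have "(m' - 1) div (i - 1) = m div i + 1" by simp
  moreover have "m - 1 = i * (m div i) + (m mod i - 1)"
    using nz mult_div_mod_eq[of i m] by linarith
  then have "(m - 1) div i = m div i"
    using \<open>m mod i < i\<close> by simp
  ultimately show ?thesis by simp
qed

lemma inv_limit_not_eventually_Ed:
  assumes x: "x \<in> inv_limit Gtop g"
  shows "\<exists>N\<ge>n. \<forall>m. x N \<noteq> Ed N m"
proof (rule ccontr)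
  assume "\<not> ?thesis"
  then obtain idx where idx: "\<And>N. N \<ge> n \<Longrightarrow> x N = Ed N (idx N)"
    by metis
  define n' where "n' = max n 1"
  define V where "V t = (idx (n' + t) - 1) div (n' + t - 1)" for t
  have "V (Suc t) < V t" for t
  proof -
    have "g (n' + t) (x (Suc (n' + t))) = x (n' + t)"
      using inv_limit_step[OF x] by (simp add: n'_def)
    then have "g (n' + t) (Ed (Suc (n' + t)) (idx (Suc (n' + t)))) = Ed (n' + t) (idx (n' + t))"
      using idx by (simp add: n'_def)
    from g_Ed_index_decreases[OF _ this] show ?thesis
      by (simp add: V_def n'_def)
  qed
  then show False
    using wf_no_infinite_down_chainE[OF wf_less_than, of V] by auto
qed

lemma trans_natural_rel: "trans (natural_rel Gtop r g)"
proof (rule transI)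
  fix x y z
  assume "(x, y) \<in> natural_rel Gtop r g" "(y, z) \<in> natural_rel Gtop r g"
  then have x: "x \<in> inv_limit Gtop g" and z: "z \<in> inv_limit Gtop g"
    and xy: "\<And>n. n \<ge> 1 \<Longrightarrow> (x n, y n) \<in> r n" and yz: "\<And>n. n \<ge> 1 \<Longrightarrow> (y n, z n) \<in> r n"
    by (auto simp: natural_rel_def)
  have "(x n, z n) \<in> r n" if n: "n \<ge> 1" for n
  proof -
    obtain N where "N \<ge> n" and not_Ed: "\<forall>m. x N \<noteq> Ed N m"
      using inv_limit_not_eventually_Ed[OF x] by blast
    moreover from this n have "N \<ge> 1" by simp
    ultimately have "(x N, z N) \<in> r N"
      using r_trans_unless_Ed xy yz by blast
    then show ?thesis
      using inv_limit_rel_downward[OF g_preserves_r x z n \<open>N \<ge> n\<close>] by simp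
  qed
  with x z show "(x, z) \<in> natural_rel Gtop r g"
    by (simp add: natural_rel_def)
qed

lemma equiv_natural_rel: "equiv (inv_limit Gtop g) (natural_rel Gtop r g)"
proof (rule equivI)
  show "natural_rel Gtop r g \<subseteq> inv_limit Gtop g \<times> inv_limit Gtop g"
    by (auto simp: natural_rel_def)
  show "refl_on (inv_limit Gtop g) (natural_rel Gtop r g)"
    unfolding refl_on_def natural_rel_def using inv_limit_in_topspace r_refl by fastforce
  show "sym (natural_rel Gtop r g)"
    using sym_r unfolding sym_def natural_rel_def by blast
qed (rule trans_natural_rel)

lemma gcell_structure_G: "gcell_structure Gtop r g"
  unfolding gcell_structure_def
proof (intro conjI allI impI)
  fix i :: nat
  assume i: "i \<ge> 1"
  show "cellular_graph (Gtop i) (r i)"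
    unfolding cellular_graph_def topspace_Gtop using r_subset_G[OF i] r_refl sym_r Ea_in_G by blast
  show "continuous_map (Gtop (Suc i)) (Gtop i) (g i)"
    unfolding Gtop_def using g_maps_G[OF i] by auto
  show "(g i x, g i y) \<in> r i" if "(x, y) \<in> r (Suc i)" for x y
    using g_preserves_r i that by blast
qed (rule equiv_natural_rel)

section \<open>Non-regularity of the quotient\<close>

lemma abar_in_inv_limit: "abar \<in> inv_limit Gtop g"
  by (rule inv_limitI) (auto simp: abar_def g_def)

lemma bbar_in_inv_limit: "k \<ge> 1 \<Longrightarrow> bbar k \<in> inv_limit Gtop g"
  by (rule inv_limitI) (auto simp: bbar_def g_def Eb_in_G)

lemma equiv_rnat: "equiv (inv_limit Gtop g) rnat"
  unfolding rnat_def by (rule equiv_natural_rel)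

lemma rnat_bbar_iff:
  assumes "k \<ge> 1"
  shows "(x, bbar k) \<in> rnat \<longleftrightarrow> x = bbar k"
proof
  assume "(x, bbar k) \<in> rnat"
  then have x: "x \<in> inv_limit Gtop g" and rel: "\<And>n. n \<ge> 1 \<Longrightarrow> (x n, Eb n k) \<in> r n"
    by (auto simp: rnat_def natural_rel_def bbar_def)
  have "x n = bbar k n" for n
  proof (cases "n \<ge> 1")
    case True
    obtain N where N: "N \<ge> max n (k + 1)" and not_Ed: "\<forall>m. x N \<noteq> Ed N m"
      using inv_limit_not_eventually_Ed[OF x] by blast
    then have "N \<ge> 1" "k < N" using True by auto
    then have "x N = Eb N k"
      using r_Eb_cases[OF rel] not_Ed by blast
    then have "x N = bbar k N"
      using \<open>N \<ge> 1\<close> by (simp add: bbar_def)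
    moreover have "n \<le> N" using N by simp
    ultimately show ?thesis
      using inv_limit_eq_downward[OF x bbar_in_inv_limit[OF assms] True] by blast
  next
    case False
    then have "n = 0" by simp
    then show ?thesis using inv_limit_0[OF x] by (simp add: bbar_def)
  qed
  then show "x = bbar k" ..
next
  assume "x = bbar k"
  then show "(x, bbar k) \<in> rnat"
    using equiv_class_self[OF equiv_rnat bbar_in_inv_limit[OF assms]] by simp
qed

lemma rnat_image_bbars: "rnat `` {bbar k | k. k \<ge> 1} = {bbar k | k. k \<ge> 1}"
proof -
  have "sym rnat" using equiv_rnat by (simp add: equiv_def)
  then show ?thesis using rnat_bbar_iff by (blast dest: symD)
qed

lemma abar_not_rnat_bbar: "k \<ge> 1 \<Longrightarrow> (abar, bbar k) \<notin> rnat"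
proof
  assume "(abar, bbar k) \<in> rnat"
  then have "(Ea (k + 1), Eb (k + 1) k) \<in> r (k + 1)"
    unfolding rnat_def natural_rel_def abar_def bbar_def by force
  then show False unfolding r_def by auto
qed

lemma topspace_Ginf: "topspace Ginf = inv_limit Gtop g"
  by (simp add: Ginf_def topspace_inv_limit_top)

lemma closedin_bbars: "closedin Ginf {bbar k | k. k \<ge> 1}" (is "closedin Ginf ?B")
  unfolding closedin_def
proof
  show "?B \<subseteq> topspace Ginf"
    using bbar_in_inv_limit by (auto simp: topspace_Ginf)
  show "openin Ginf (topspace Ginf - ?B)"
  proof (subst openin_subopen, intro ballI)
    fix x
    assume "x \<in> topspace Ginf - ?B"
    then have x: "x \<in> inv_limit Gtop g" and x_not_B: "x \<notin> ?B"
      by (auto simp: topspace_Ginf)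
    \<comment> \<open>the first coordinate of b^k determines k, so one further coordinate separates x from all b^k\<close>
    obtain N where "N \<ge> 1" and N: "\<And>k. bbar k 1 = x 1 \<Longrightarrow> bbar k N \<noteq> x N"
    proof (cases "\<exists>k0. x 1 = Eb 1 k0")
      case True
      then obtain k0 where k0: "x 1 = Eb 1 k0" by blast
      then have "k0 \<ge> 1" using inv_limit_in_topspace[OF x, of 1] by (auto simp: G_def)
      then obtain n where n: "x n \<noteq> bbar k0 n" using x_not_B by blast
      then have "n \<ge> 1" using inv_limit_0[OF x] by (cases n) (auto simp: bbar_def)
      moreover have "bbar k n \<noteq> x n" if "bbar k 1 = x 1" for k
        using that k0 n by (simp add: bbar_def)
      ultimately show thesis by (rule that)
    next
      case False
      then have "bbar k 1 \<noteq> x 1" for k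
        by (simp add: bbar_def) metis
      then show thesis by (intro that[of 1]) auto
    qed
    let ?T = "{z \<in> inv_limit Gtop g. z 1 \<in> {x 1}} \<inter> {z \<in> inv_limit Gtop g. z N \<in> {x N}}"
    have "openin Ginf ?T"
      unfolding Ginf_def using \<open>N \<ge> 1\<close> inv_limit_in_topspace[OF x]
      by (intro openin_Int openin_inv_limit_top_coordinate) (auto simp: Gtop_def)
    moreover have "?T \<subseteq> topspace Ginf - ?B"
      using N by (auto simp: topspace_Ginf)
    ultimately show "\<exists>T. openin Ginf T \<and> x \<in> T \<and> T \<subseteq> topspace Ginf - ?B"
      using x by blast
  qed
qed

lemma L_mono_steps: "M \<le> i \<Longrightarrow> L M + (i - M) * M \<le> L i"
proof (induction i rule: dec_induct)
  case (step i)
  then have "(Suc i - M) * M = (i - M) * M + M" by (simp add: Suc_diff_le)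
  then show ?case using step by simp
qed simp

lemma new_cell_index_le_L:
  assumes "1 \<le> k" "k < M" "M < i"
  shows "L M + k + i - M \<le> L i"
proof -
  have "(i - M) * M \<ge> (i - M) * (k + 1)" using assms by (intro mult_le_mono2) simp
  moreover have "(i - M) * (k + 1) = (i - M) * k + (i - M)" by simp
  moreover have "(i - M) * k \<ge> k" using assms by simp
  ultimately have "(i - M) * M \<ge> k + (i - M)" by linarith
  then show ?thesis using L_mono_steps[of M i] assms by linarith
qed

(* Above level M both threads run through the cell C^i_(L_M + k + i - M), which the bonding map
   collapses at level M + 1 onto the edge between d_M^k and b_M^k.  Between levels k and M the
   a-side sits on d-vertices adjacent to b_i^k, and at level k + 1 the d-vertex maps onto a_k. *)
definition a_thread :: "nat \<Rightarrow> nat \<Rightarrow> nat \<Rightarrow> elt" where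
  "a_thread k M i =
     (if i \<ge> 1 then
        (if i \<le> k then Ea i
         else if i \<le> M then Ed i ((i - 1) * (M - i) + k)
         else Ec 1 i (L M + k + i - M))
      else undefined)"

definition b_thread :: "nat \<Rightarrow> nat \<Rightarrow> nat \<Rightarrow> elt" where
  "b_thread k M i =
     (if i \<ge> 1 then (if i \<le> M then Eb i k else Ec 2 i (L M + k + i - M)) else undefined)"

context
  fixes k M :: nat
  assumes kM: "1 \<le> k" "k < M"
begin

lemma a_thread_in_inv_limit: "a_thread k M \<in> inv_limit Gtop g"
proof (rule inv_limitI)
  fix i :: nat
  assume i: "i \<ge> 1"
  show "a_thread k M i \<in> topspace (Gtop i)"
    using kM new_cell_index_le_L[OF kM, of i] i by (auto simp: a_thread_def G_def)
  consider "i < k" | "i = k" | "k < i" "i < M" | "i = M" | "M < i" by linarith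
  then show "g i (a_thread k M (Suc i)) = a_thread k M i"
  proof cases
    case 2
    have "(k * (M - Suc k) + k) mod k = 0" by (simp add: mod_add_left_eq)
    then show ?thesis using 2 kM by (simp add: a_thread_def g_def)
  next
    case 3
    then have "(i * (M - Suc i) + k) mod i = k" "(i * (M - Suc i) + k) div i = M - Suc i"
      "(i - 1) * (M - Suc i + 1) + k = (i - 1) * (M - i) + k"
      by (auto simp: Suc_diff_Suc)
    then show ?thesis using 3 kM by (simp add: a_thread_def g_def)
  next
    case 5
    then have "Suc (L M + k + i) - M = Suc (L M + k + i - M)" "L M + k + i - M \<ge> 1"
      by auto
    then show ?thesis using new_cell_index_le_L[OF kM 5] 5 kM by (simp add: a_thread_def g_def)
  qed (use kM i in \<open>simp_all add: a_thread_def g_def\<close>)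
qed (simp add: a_thread_def)

lemma b_thread_in_inv_limit: "b_thread k M \<in> inv_limit Gtop g"
proof (rule inv_limitI)
  fix i :: nat
  assume i: "i \<ge> 1"
  show "b_thread k M i \<in> topspace (Gtop i)"
    using kM new_cell_index_le_L[OF kM, of i] i by (auto simp: b_thread_def G_def)
  consider "i < M" | "i = M" | "M < i" by linarith
  then show "g i (b_thread k M (Suc i)) = b_thread k M i"
  proof cases
    case 3
    then have "Suc (L M + k + i) - M = Suc (L M + k + i - M)" "L M + k + i - M \<ge> 1"
      by auto
    then show ?thesis using new_cell_index_le_L[OF kM 3] 3 by (simp add: b_thread_def g_def)
  qed (use kM i in \<open>simp_all add: b_thread_def g_def\<close>)
qed (simp add: b_thread_def)

lemma a_thread_rnat_b_thread: "(a_thread k M, b_thread k M) \<in> rnat"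
  unfolding rnat_def natural_rel_def
proof (intro CollectI conjI case_prodI allI impI a_thread_in_inv_limit b_thread_in_inv_limit)
  fix i :: nat
  assume i: "i \<ge> 1"
  consider "i \<le> k" | "k < i" "i \<le> M" | "M < i" by linarith
  then show "(a_thread k M i, b_thread k M i) \<in> r i"
  proof cases
    case 1
    then show ?thesis using i kM by (auto simp: a_thread_def b_thread_def r_def)
  next
    case 2
    then show ?thesis
      using i kM by (auto simp: a_thread_def b_thread_def intro!: r_Ed_Eb[where j = "M - i"])
  next
    case 3
    then show ?thesis
      using i kM new_cell_index_le_L[OF kM 3] unfolding a_thread_def b_thread_def r_def by auto
  qed
qed

end

lemma abar_linked_to_bbars:
  "\<exists>b\<in>{bbar k | k. k \<ge> 1}. \<forall>m. \<exists>x y. (x, y) \<in> rnat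
      \<and> (\<forall>i\<in>{1..n}. x i = abar i) \<and> (\<forall>i\<in>{1..m}. y i = b i)"
proof (intro bexI allI)
  fix m
  define M where "M = m + n + 2"
  have kM: "1 \<le> Suc n" "Suc n < M" by (auto simp: M_def)
  show "\<exists>x y. (x, y) \<in> rnat \<and> (\<forall>i\<in>{1..n}. x i = abar i) \<and> (\<forall>i\<in>{1..m}. y i = bbar (Suc n) i)"
  proof (intro exI conjI ballI)
    show "(a_thread (Suc n) M, b_thread (Suc n) M) \<in> rnat"
      by (rule a_thread_rnat_b_thread[OF kM])
    show "a_thread (Suc n) M i = abar i" if "i \<in> {1..n}" for i
      using that by (simp add: a_thread_def abar_def)
    show "b_thread (Suc n) M i = bbar (Suc n) i" if "i \<in> {1..m}" for i
      using that by (simp add: b_thread_def bbar_def M_def)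
  qed
qed auto

lemma closedin_qmap_bbars: "closedin Gstar (qmap rnat ` {bbar k | k. k \<ge> 1})"
  unfolding Gstar_def using equiv_rnat bbar_in_inv_limit closedin_bbars
  by (intro closedin_quotient_top_qmap_image) (auto simp only: topspace_Ginf rnat_image_bbars)

lemma qmap_abar_notin_qmap_bbars: "qmap rnat abar \<notin> qmap rnat ` {bbar k | k. k \<ge> 1}"
proof
  assume "qmap rnat abar \<in> qmap rnat ` {bbar k | k. k \<ge> 1}"
  then obtain k where "k \<ge> 1" "rnat `` {abar} = rnat `` {bbar k}"
    by (auto simp: qmap_def)
  then have "(abar, bbar k) \<in> rnat"
    using equiv_class_eq_iff[OF equiv_rnat, of abar "bbar k"] abar_in_inv_limit
      bbar_in_inv_limit[OF \<open>k \<ge> 1\<close>] by simp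
  then show False using abar_not_rnat_bbar \<open>k \<ge> 1\<close> by blast
qed

lemma qmap_abar_qmap_bbars_not_separated:
  "\<not> (\<exists>U V. openin Gstar U \<and> openin Gstar V \<and> qmap rnat abar \<in> U
       \<and> qmap rnat ` {bbar k | k. k \<ge> 1} \<subseteq> V \<and> disjnt U V)"
  unfolding Gstar_def Ginf_def
  using quotient_inv_limit_not_separated[OF equiv_rnat abar_in_inv_limit _ abar_linked_to_bbars]
    bbar_in_inv_limit by blast

theorem mainTheorem10:
  shows "gcell_structure Gtop r g
    \<and> abar \<in> topspace Ginf \<and> {bbar k | k. k \<ge> 1} \<subseteq> topspace Ginf
    \<and> closedin Gstar (qmap rnat ` {bbar k | k. k \<ge> 1})
    \<and> qmap rnat abar \<notin> qmap rnat ` {bbar k | k. k \<ge> 1}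
    \<and> \<not> (\<exists>U V. openin Gstar U \<and> openin Gstar V \<and> qmap rnat abar \<in> U
              \<and> qmap rnat ` {bbar k | k. k \<ge> 1} \<subseteq> V \<and> disjnt U V)
    \<and> \<not> regular_space Gstar"
proof -
  have "qmap rnat abar \<in> topspace Gstar"
    unfolding Gstar_def using abar_in_inv_limit topspace_Ginf
    by (simp add: qmap_in_topspace_quotient_top)
  then have "\<not> regular_space Gstar"
    using closedin_qmap_bbars qmap_abar_notin_qmap_bbars qmap_abar_qmap_bbars_not_separated
    unfolding regular_space_def by blast
  then show ?thesis
    using gcell_structure_G abar_in_inv_limit bbar_in_inv_limit topspace_Ginf
      closedin_qmap_bbars qmap_abar_notin_qmap_bbars qmap_abar_qmap_bbars_not_separated
    by auto
qed

end
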